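(* Consider the multi-element (three spatial elements, periodic), single-slab space-time SBP scheme: unknowns $\boldsymbol\rho,\boldsymbol g_1,\dots,\boldsymbol g_{n_v}\in\mathbb R^{3(n_t+1)(n_x+1)}$ satisfying $$\mathsf D_t\boldsymbol\rho+\tilde{\mathsf D}_x\langle v\boldsymbol g\rangle=-\sigma_a\boldsymbol\rho-\mathsf H_t^{-1}\mathsf t_B\mathsf t_B^\top(\boldsymbol\rho-\boldsymbol\rho(0)),$$ $$\mathsf D_t\boldsymbol g_k+\tfrac{v_k}{\varepsilon}\tilde{\mathsf D}_x\boldsymbol g_k-\tfrac1\varepsilon\langle v\tilde{\mathsf D}_x\boldsymbol g\rangle+\tfrac{v_k}{\varepsilon^2}\tilde{\mathsf D}_x\boldsymbol\rho=-\Big(\tfrac{\sigma_s}{\varepsilon^2}+\sigma_a\Big)\boldsymbol g_k-\mathsf H_t^{-1}\mathsf t_B\mathsf t_B^\top(\boldsymbol g_k-\boldsymbol g_k(0)),\quad k=1,\dots,n_v,$$ with initial data satisfying $\langle\boldsymbol g(0)\rangle=0$. Then the scheme is stable: with $M_T=\bar{\boldsymbol t}_T\bar{\boldsymbol t}_T^\top\otimes\mathsf I_3\otimes\bar{\mathsf H}_x$ and $M_B=\bar{\boldsymbol t}_B\bar{\boldsymbol t}_B^\top\otimes\mathsf I_3\otimes\bar{\mathsf H}_x$, every solution satisfies $$\tfrac12\boldsymbol\rho^\top M_T\boldsymbol\rho+\tfrac{\varepsilon^2}2\langle\boldsymbol g^\top M_T\boldsymbol g\rangle\le\tfrac12\boldsymbol\rho(0)^\top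 M_B\boldsymbol\rho(0)+\tfrac{\varepsilon^2}2\langle\boldsymbol g(0)^\top M_B\boldsymbol g(0)\rangle.$$
   Context: SBP operators: $\bar{\mathsf D}=\bar{\mathsf H}^{-1}\bar{\mathsf Q}$ on nodes $x_0<\dots<x_n$ is a degree-$p$ SBP approximation of $d/dx$ if $\bar{\mathsf D}\boldsymbol x^k=k\boldsymbol x^{k-1}$ for $0\le k\le p$, $\bar{\mathsf H}$ is diagonal symmetric positive definite, and $\bar{\mathsf Q}+\bar{\mathsf Q}^\top=\bar{\mathsf E}=\bar{\boldsymbol t}_R\bar{\boldsymbol t}_R^\top-\bar{\boldsymbol t}_L\bar{\boldsymbol t}_L^\top=\mathrm{diag}(-1,0,\dots,0,1)$, $\bar{\boldsymbol t}_L,\bar{\boldsymbol t}_R$ first/last unit vectors. $\bar{\mathsf D}_x=\bar{\mathsf H}_x^{-1}\bar{\mathsf Q}_x$ on $n_x+1$ spatial nodes per element, $\bar{\mathsf S}_x=\bar{\mathsf Q}_x-\frac12\bar{\mathsf E}_x$; $\bar{\mathsf D}_t=\bar{\mathsf H}_t^{-1}\bar{\mathsf Q}_t$ on $n_t+1$ temporal nodes, first/last unit vectors $\bar{\boldsymbol t}_B,\bar{\boldsymbol t}_T$. Global periodic spatial operator over three elements: $\tilde{\bar{\mathsf D}}^G_x=(\mathsf I_3\otimes\bar{\mathsf H}_x^{-1})\tilde{\bar{\mathsf Q}}^G_x$, where $\tilde{\bar{\mathsf Q}}^G_x$ is the $3\times3$ block matrix with diagonal blocks $\bar{\mathsf S}_x$,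 blocks $(1,2),(2,3),(3,1)$ equal to $\frac12\bar{\boldsymbol t}_R\bar{\boldsymbol t}_L^\top$ and blocks $(2,1),(3,2),(1,3)$ equal to $-\frac12\bar{\boldsymbol t}_L\bar{\boldsymbol t}_R^\top$. With identities $\mathsf I_{n_x},\mathsf I_{n_t}$ of sizes $n_x+1,n_t+1$: $\tilde{\mathsf D}_x=\mathsf I_{n_t}\otimes\tilde{\bar{\mathsf D}}^G_x$, $\mathsf D_t=\bar{\mathsf D}_t\otimes\mathsf I_3\otimes\mathsf I_{n_x}$, $\mathsf H_t=\bar{\mathsf H}_t\otimes\mathsf I_3\otimes\mathsf I_{n_x}$, $\mathsf t_B=\bar{\boldsymbol t}_B\otimes\mathsf I_3\otimes\mathsf I_{n_x}$. Velocity nodes $v_k$, weights $\omega_k$, $\sum\omega_k=1$, $\sum\omega_kv_k=0$; $\langle\boldsymbol a\rangle=\sum_k\omega_k\boldsymbol a_k$ (e.g. $\langle\boldsymbol g^\top M\boldsymbol g\rangle=\sum_k\omega_k\boldsymbol g_k^\top M\boldsymbol g_k$). $\varepsilon>0$, $\sigma_s>0$, $\sigma_a\ge0$; $\boldsymbol\rho(0),\boldsymbol g_k(0)$ given initial-data vectors. *)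

theory Defs
  imports "Jordan_Normal_Form.Matrix"
begin

definition minv :: "real mat \<Rightarrow> real mat" where
  "minv A = (SOME B. B \<in> carrier_mat (dim_col A) (dim_row A) \<and>
                     A * B = 1\<^sub>m (dim_row A) \<and> B * A = 1\<^sub>m (dim_col A))"

definition kron :: "real mat \<Rightarrow> real mat \<Rightarrow> real mat" where
  "kron A B = mat (dim_row A * dim_row B) (dim_col A * dim_col B)
     (\<lambda>(i,j). A $$ (i div dim_row B, j div dim_col B) * B $$ (i mod dim_row B, j mod dim_col B))"

definition outer :: "real vec \<Rightarrow> real vec \<Rightarrow> real mat" where
  "outer u w = mat (dim_vec u) (dim_vec w) (\<lambda>(i,j). u $ i * w $ j)"

definition col_mat :: "real vec \<Rightarrow> real mat" where
  "col_mat u = mat (dim_vec u) 1 (\<lambda>(i,j). u $ i)"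

definition tL :: "nat \<Rightarrow> real vec" where "tL n = unit_vec (n+1) 0"
definition tR :: "nat \<Rightarrow> real vec" where "tR n = unit_vec (n+1) n"
definition sbpE :: "nat \<Rightarrow> real mat" where
  "sbpE n = outer (tR n) (tR n) - outer (tL n) (tL n)"

definition nodepow :: "nat \<Rightarrow> (nat \<Rightarrow> real) \<Rightarrow> nat \<Rightarrow> real vec" where
  "nodepow n x k = vec (n+1) (\<lambda>i. x i ^ k)"

definition sbp :: "nat \<Rightarrow> (nat \<Rightarrow> real) \<Rightarrow> nat \<Rightarrow> real mat \<Rightarrow> real mat \<Rightarrow> bool" where
  "sbp n x p H Q \<longleftrightarrow>
     1 \<le> n \<and> (\<forall>i<n. x i < x (Suc i)) \<and>
     H \<in> carrier_mat (n+1) (n+1) \<and> Q \<in> carrier_mat (n+1) (n+1) \<and>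
     diagonal_mat H \<and> transpose_mat H = H \<and>
     (\<forall>w \<in> carrier_vec (n+1). w \<noteq> 0\<^sub>v (n+1) \<longrightarrow> 0 < w \<bullet> (H *\<^sub>v w)) \<and>
     Q + transpose_mat Q = sbpE n \<and>
     (\<forall>k\<le>p. (minv H * Q) *\<^sub>v nodepow n x k = real k \<cdot>\<^sub>v nodepow n x (k - 1))"

definition blocks3 :: "nat \<Rightarrow> (nat \<Rightarrow> nat \<Rightarrow> real mat) \<Rightarrow> real mat" where
  "blocks3 m B = mat (3*m) (3*m) (\<lambda>(i,j). B (i div m) (j div m) $$ (i mod m, j mod m))"

text \<open>Periodic global Q over three elements (block indices 0,1,2):
  diagonal blocks S_x; blocks (1,2),(2,3),(3,1) [1-based] equal 1/2 t_R t_L^T;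
  blocks (2,1),(3,2),(1,3) equal -1/2 t_L t_R^T.\<close>
definition QGx :: "nat \<Rightarrow> real mat \<Rightarrow> real mat" where
  "QGx nx Qx = blocks3 (nx+1) (\<lambda>a b.
      if a = b then Qx - (1/2) \<cdot>\<^sub>m sbpE nx
      else if b = (a+1) mod 3 then (1/2) \<cdot>\<^sub>m outer (tR nx) (tL nx)
      else if a = (b+1) mod 3 then (-(1/2)) \<cdot>\<^sub>m outer (tL nx) (tR nx)
      else 0\<^sub>m (nx+1) (nx+1))"

definition DGx :: "nat \<Rightarrow> real mat \<Rightarrow> real mat \<Rightarrow> real mat" where
  "DGx nx Hx Qx = kron (1\<^sub>m 3) (minv Hx) * QGx nx Qx"

definition Dx_st :: "nat \<Rightarrow> nat \<Rightarrow> real mat \<Rightarrow> real mat \<Rightarrow> real mat" where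
  "Dx_st nx nt Hx Qx = kron (1\<^sub>m (nt+1)) (DGx nx Hx Qx)"
definition Dt_st :: "nat \<Rightarrow> nat \<Rightarrow> real mat \<Rightarrow> real mat \<Rightarrow> real mat" where
  "Dt_st nx nt Ht Qt = kron (minv Ht * Qt) (kron (1\<^sub>m 3) (1\<^sub>m (nx+1)))"
definition Ht_st :: "nat \<Rightarrow> real mat \<Rightarrow> real mat" where
  "Ht_st nx Ht = kron Ht (kron (1\<^sub>m 3) (1\<^sub>m (nx+1)))"
definition tB_st :: "nat \<Rightarrow> nat \<Rightarrow> real mat" where
  "tB_st nx nt = kron (col_mat (tL nt)) (kron (1\<^sub>m 3) (1\<^sub>m (nx+1)))"

definition MT :: "nat \<Rightarrow> nat \<Rightarrow> real mat \<Rightarrow> real mat" where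
  "MT nx nt Hx = kron (outer (tR nt) (tR nt)) (kron (1\<^sub>m 3) Hx)"
definition MB :: "nat \<Rightarrow> nat \<Rightarrow> real mat \<Rightarrow> real mat" where
  "MB nx nt Hx = kron (outer (tL nt) (tL nt)) (kron (1\<^sub>m 3) Hx)"

definition vavg :: "nat \<Rightarrow> (nat \<Rightarrow> real) \<Rightarrow> nat \<Rightarrow> (nat \<Rightarrow> real vec) \<Rightarrow> real vec" where
  "vavg nv w N a = vec N (\<lambda>i. \<Sum>k<nv. w k * (a k $ i))"

end

theory Submission
  imports Defs
begin

text \<open>
  The energy method. Write H for the space-time norm H_t (x) I_3 (x) H_x. Testing an equation of
  the scheme against u^T H turns the time derivative into the boundary form
  1/2 u^T M_T u - 1/2 u^T M_B u (SBP property of D_t), makes the spatial operator skew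
  (H D_x = H_t (x) Q^G_x, and the periodic interface blocks of Q^G_x cancel the boundary part
  of Q_x), and turns the SAT into u^T M_B (u - u(0)), which is bounded below by
  1/2 u^T M_B u - 1/2 u(0)^T M_B u(0).

  Averaging the kinetic equations over the velocities, <1> = 1 and <v> = 0 make the transport
  terms cancel, so <g> solves a dissipative homogeneous problem with zero initial data and
  vanishes. Testing the density equation with rho and the kinetic equations with eps^2 g_k and
  averaging, the couplings then cancel: the terms g_k^T H <v D_x g> average to zero because
  <g> = 0, and rho^T H D_x <v g> cancels <v g^T H D_x rho> by skew-symmetry; absorption and
  scattering only dissipate.
\<close>

section \<open>Kronecker products\<close>

lemma kron_carrier [simp]:
  "kron A B \<in> carrier_mat (dim_row A * dim_row B) (dim_col A * dim_col B)"
  "dim_row (kron A B) = dim_row A * dim_row B" "dim_col (kron A B) = dim_col A * dim_col B"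
  by (simp_all add: kron_def)

lemma kron_carrier_mat:
  "A \<in> carrier_mat m n \<Longrightarrow> B \<in> carrier_mat p q \<Longrightarrow> kron A B \<in> carrier_mat (m * p) (n * q)"
  by auto

lemma index_kron [simp]:
  "i < dim_row A * dim_row B \<Longrightarrow> j < dim_col A * dim_col B \<Longrightarrow>
   kron A B $$ (i, j) = A $$ (i div dim_row B, j div dim_col B) * B $$ (i mod dim_row B, j mod dim_col B)"
  by (simp add: kron_def)

lemma div_mod_less_mult: "i < m * (q::nat) \<Longrightarrow> i div q < m \<and> i mod q < q"
  by (metis less_mult_imp_div_less mod_less_divisor mult_zero_right not_less_zero gr0I)

lemma sum_lessThan_mult:
  "(\<Sum>k<n * q. f k) = (\<Sum>a<n. \<Sum>b<q. f (a * q + b :: nat))"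
  by (simp add: sum.nat_group[symmetric] sum.shift_bounds_nat_ivl[of f 0, simplified] atLeast0LessThan add.commute)

lemma kron_mult:
  assumes A: "A \<in> carrier_mat m n" and B: "B \<in> carrier_mat p q"
    and C: "C \<in> carrier_mat n r" and D: "D \<in> carrier_mat q s"
  shows "kron A B * kron C D = kron (A * C) (B * D)"
proof (rule eq_matI)
  fix i j assume "i < dim_row (kron (A * C) (B * D))" "j < dim_col (kron (A * C) (B * D))"
  then have i: "i < m * p" and j: "j < r * s" using A B C D by auto
  have "(kron A B * kron C D) $$ (i, j)
      = (\<Sum>k<n * q. A $$ (i div p, k div q) * B $$ (i mod p, k mod q)
                     * (C $$ (k div q, j div s) * D $$ (k mod q, j mod s)))"
    using i j A B C D by (simp add: scalar_prod_def lessThan_atLeast0 div_mod_less_mult)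
  also have "\<dots> = (\<Sum>a<n. A $$ (i div p, a) * C $$ (a, j div s)) * (\<Sum>b<q. B $$ (i mod p, b) * D $$ (b, j mod s))"
    by (simp add: sum_lessThan_mult sum_product mult_ac)
  also have "\<dots> = kron (A * C) (B * D) $$ (i, j)"
    using i j A B C D div_mod_less_mult[OF i] div_mod_less_mult[OF j]
    by (simp add: scalar_prod_def lessThan_atLeast0)
  finally show "(kron A B * kron C D) $$ (i, j) = kron (A * C) (B * D) $$ (i, j)" .
qed (use assms in auto)

lemma kron_one [simp]: "kron (1\<^sub>m a) (1\<^sub>m b) = 1\<^sub>m (a * b)"
proof (rule eq_matI)
  fix i j assume "i < dim_row (1\<^sub>m (a * b))" "j < dim_col (1\<^sub>m (a * b))"
  then have i: "i < a * b" and j: "j < a * b" by auto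
  have "(i div b = j div b \<and> i mod b = j mod b) = (i = j)"
    by (metis div_mult_mod_eq)
  then show "kron (1\<^sub>m a) (1\<^sub>m b) $$ (i, j) = 1\<^sub>m (a * b) $$ (i, j)"
    using i j div_mod_less_mult[OF i] div_mod_less_mult[OF j] by auto
qed auto

lemma transpose_kron: "transpose_mat (kron A B) = kron (transpose_mat A) (transpose_mat B)"
  by (rule eq_matI) (auto simp: div_mod_less_mult)

lemma kron_add_left:
  "A \<in> carrier_mat m n \<Longrightarrow> B \<in> carrier_mat m n \<Longrightarrow> kron (A + B) C = kron A C + kron B C"
  by (rule eq_matI) (auto simp: div_mod_less_mult algebra_simps)

lemma kron_minus_left:
  "A \<in> carrier_mat m n \<Longrightarrow> B \<in> carrier_mat m n \<Longrightarrow> kron (A - B) C = kron A C - kron B C"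
  by (rule eq_matI) (auto simp: div_mod_less_mult algebra_simps)

lemma kron_uminus_right: "kron A (- B) = - kron A B"
  by (rule eq_matI) (auto simp: div_mod_less_mult)

lemma diagonal_kron:
  assumes "diagonal_mat A" "diagonal_mat B" "B \<in> carrier_mat p p"
  shows "diagonal_mat (kron A B)"
  unfolding diagonal_mat_def
proof (intro allI impI)
  fix i j assume i: "i < dim_row (kron A B)" and j: "j < dim_col (kron A B)" and "i \<noteq> j"
  then have "i div p \<noteq> j div p \<or> i mod p \<noteq> j mod p" by (metis div_mult_mod_eq)
  then show "kron A B $$ (i, j) = 0"
    using i j assms div_mod_less_mult[of i _ p] div_mod_less_mult[of j _ p]
    by (auto simp: diagonal_mat_def)
qed

lemma kron_diagonal_pos:
  assumes "A \<in> carrier_mat a a" "B \<in> carrier_mat b b"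
    and "\<And>i. i < a \<Longrightarrow> 0 < A $$ (i, i)" "\<And>j. j < b \<Longrightarrow> 0 < B $$ (j, j)" and i: "i < a * b"
  shows "0 < kron A B $$ (i, i)"
  using assms div_mod_less_mult[OF i] by simp

lemma kron_diagonal_nonneg:
  assumes "A \<in> carrier_mat a a" "B \<in> carrier_mat b b"
    and "\<And>i. i < a \<Longrightarrow> 0 \<le> A $$ (i, i)" "\<And>j. j < b \<Longrightarrow> 0 \<le> B $$ (j, j)" and i: "i < a * b"
  shows "0 \<le> kron A B $$ (i, i)"
  using assms div_mod_less_mult[OF i] by simp

lemma diagonal_quadratic_form:
  fixes M :: "real mat"
  assumes M: "M \<in> carrier_mat n n" and "diagonal_mat M" and u: "u \<in> carrier_vec n"
  shows "u \<bullet> (M *\<^sub>v u) = (\<Sum>i<n. M $$ (i, i) * (u $ i)\<^sup>2)"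
proof -
  have "u \<bullet> (M *\<^sub>v u) = (\<Sum>i<n. u $ i * (\<Sum>j<n. M $$ (i, j) * u $ j))"
    using M u by (simp add: scalar_prod_def lessThan_atLeast0 mult_mat_vec_def)
  also have "\<dots> = (\<Sum>i<n. u $ i * (\<Sum>j<n. if j = i then M $$ (i, i) * u $ i else 0))"
    using assms by (intro sum.cong refl arg_cong2[where f = "(*)"]) (auto simp: diagonal_mat_def)
  finally show ?thesis by (simp add: power2_eq_square mult_ac)
qed

lemma diagonal_psd:
  fixes M :: "real mat"
  assumes "M \<in> carrier_mat n n" "diagonal_mat M" "\<And>i. i < n \<Longrightarrow> 0 \<le> M $$ (i, i)"
    and "u \<in> carrier_vec n"
  shows "0 \<le> u \<bullet> (M *\<^sub>v u)"
  unfolding diagonal_quadratic_form[OF assms(1,2,4)] by (intro sum_nonneg) (simp add: assms(3))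

lemma diagonal_pos_def:
  fixes M :: "real mat"
  assumes M: "M \<in> carrier_mat n n" "diagonal_mat M" and pos: "\<And>i. i < n \<Longrightarrow> 0 < M $$ (i, i)"
    and u: "u \<in> carrier_vec n" "u \<noteq> 0\<^sub>v n"
  shows "0 < u \<bullet> (M *\<^sub>v u)"
proof -
  obtain i where i: "i < n" "u $ i \<noteq> 0" using u by (metis eq_vecI carrier_vecD index_zero_vec)
  have "0 < M $$ (i, i) * (u $ i)\<^sup>2" using pos i by simp
  also have "\<dots> \<le> (\<Sum>i<n. M $$ (i, i) * (u $ i)\<^sup>2)"
    using i pos by (intro member_le_sum mult_nonneg_nonneg) (auto simp: less_imp_le)
  finally show ?thesis using M u by (simp add: diagonal_quadratic_form)
qed

lemma skew_bilinear_form: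
  fixes A :: "real mat"
  assumes A: "A \<in> carrier_mat n n" and skew: "transpose_mat A = - A"
    and u: "u \<in> carrier_vec n" and z: "z \<in> carrier_vec n"
  shows "u \<bullet> (A *\<^sub>v z) = - (z \<bullet> (A *\<^sub>v u))"
proof -
  have "u \<bullet> (A *\<^sub>v z) = (transpose_mat A *\<^sub>v u) \<bullet> z"
    using transpose_vec_mult_scalar[OF A z u] ..
  also have "\<dots> = - ((A *\<^sub>v u) \<bullet> z)"
    using A u z by (simp add: skew)
  finally show ?thesis using A u z by (simp add: comm_scalar_prod[of _ n])
qed

lemma quadratic_form_symmetric_part:
  fixes A :: "real mat"
  assumes A: "A \<in> carrier_mat n n" and u: "u \<in> carrier_vec n"
  shows "u \<bullet> (A *\<^sub>v u) = 1/2 * (u \<bullet> ((A + transpose_mat A) *\<^sub>v u))"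
proof -
  have "u \<bullet> (transpose_mat A *\<^sub>v u) = u \<bullet> (A *\<^sub>v u)"
    using transpose_vec_mult_scalar[of "transpose_mat A" n n u u] A u
    by (simp add: comm_scalar_prod[of _ n])
  then show ?thesis
    using A u by (simp add: add_mult_distrib_mat_vec[of _ n n] scalar_prod_add_distrib[of _ n])
qed

lemma psd_bilinear_bound:
  fixes M :: "real mat"
  assumes M: "M \<in> carrier_mat n n" and sym: "transpose_mat M = M"
    and psd: "0 \<le> (u - z) \<bullet> (M *\<^sub>v (u - z))"
    and u: "u \<in> carrier_vec n" and z: "z \<in> carrier_vec n"
  shows "u \<bullet> (M *\<^sub>v z) \<le> 1/2 * (u \<bullet> (M *\<^sub>v u)) + 1/2 * (z \<bullet> (M *\<^sub>v z))"
proof -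
  have "z \<bullet> (M *\<^sub>v u) = u \<bullet> (M *\<^sub>v z)"
    using transpose_vec_mult_scalar[OF M u z] M u z by (simp add: sym comm_scalar_prod[of _ n])
  then show ?thesis
    using psd M u z
    by (simp add: mult_minus_distrib_mat_vec[OF M] scalar_prod_minus_distrib[of _ n]
        minus_scalar_prod_distrib[of _ n])
qed

lemma minv_eqI:
  assumes A: "A \<in> carrier_mat n n" and B: "B \<in> carrier_mat n n"
    and AB: "A * B = 1\<^sub>m n" and BA: "B * A = 1\<^sub>m n"
  shows "minv A = B"
proof -
  let ?inv = "\<lambda>C. C \<in> carrier_mat (dim_col A) (dim_row A) \<and> A * C = 1\<^sub>m (dim_row A) \<and> C * A = 1\<^sub>m (dim_col A)"
  have "?inv B" using assms by auto
  then have C: "minv A \<in> carrier_mat n n" "minv A * A = 1\<^sub>m n"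
    unfolding minv_def using A by (metis (mono_tags, lifting) someI_ex carrier_matD)+
  have "minv A = minv A * (A * B)" using C AB by simp
  also have "\<dots> = B" using A B C by (simp flip: assoc_mult_mat[of _ n n A n B n])
  finally show ?thesis .
qed

lemma minv_invertible:
  assumes "invertible_mat A" and A: "A \<in> carrier_mat n n"
  shows "minv A \<in> carrier_mat n n" "A * minv A = 1\<^sub>m n" "minv A * A = 1\<^sub>m n"
proof -
  obtain B where AB: "A * B = 1\<^sub>m n" and BA: "B * A = 1\<^sub>m (dim_row B)"
    using assms by (auto simp: invertible_mat_def inverts_mat_def)
  have B: "B \<in> carrier_mat n n"
    using arg_cong[OF AB, of dim_col] arg_cong[OF BA, of dim_col] A by auto
  with BA have "B * A = 1\<^sub>m n" by simp
  with minv_eqI[OF A B AB] B AB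
  show "minv A \<in> carrier_mat n n" "A * minv A = 1\<^sub>m n" "minv A * A = 1\<^sub>m n" by simp_all
qed

lemma invertible_diagonal:
  fixes H :: "real mat"
  assumes H: "H \<in> carrier_mat n n" "diagonal_mat H" and nz: "\<And>i. i < n \<Longrightarrow> H $$ (i, i) \<noteq> 0"
  shows "invertible_mat H"
proof -
  define D where "D = mat n n (\<lambda>(i, j). if i = j then 1 / H $$ (i, i) else 0)"
  have "H * D = 1\<^sub>m n" and "D * H = 1\<^sub>m n"
    using H nz by (auto intro!: eq_matI simp: D_def scalar_prod_def diagonal_mat_def
        if_distrib[of "\<lambda>x. x * _"] if_distrib[of "\<lambda>x. _ * x"] cong: if_cong)
  then show ?thesis using H by (auto simp: invertible_mat_def inverts_mat_def square_mat.simps D_def)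
qed

lemma dim_tL_tR [simp]: "dim_vec (tL n) = n + 1" "dim_vec (tR n) = n + 1"
  by (simp_all add: tL_def tR_def)

lemma outer_carrier [simp]: "dim_vec a = m \<Longrightarrow> dim_vec b = n \<Longrightarrow> outer a b \<in> carrier_mat m n"
  by (simp add: outer_def)

lemma dim_outer [simp]: "dim_row (outer a b) = dim_vec a" "dim_col (outer a b) = dim_vec b"
  by (simp_all add: outer_def)

lemma index_outer [simp]: "i < dim_vec a \<Longrightarrow> j < dim_vec b \<Longrightarrow> outer a b $$ (i, j) = a $ i * b $ j"
  by (simp add: outer_def)

lemma diagonal_outer_unit_vec: "diagonal_mat (outer (unit_vec n k) (unit_vec n k))"
  by (auto simp: diagonal_mat_def outer_def unit_vec_def)

lemma transpose_outer: "transpose_mat (outer a b) = outer b a"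
  by (rule eq_matI) (auto simp: outer_def)

lemma col_mat_outer: "col_mat u * transpose_mat (col_mat u) = outer u u"
  by (rule eq_matI) (auto simp: col_mat_def outer_def scalar_prod_def)

lemma vavg_carrier [simp]: "vavg nv w N a \<in> carrier_vec N" "dim_vec (vavg nv w N a) = N"
  by (auto simp: vavg_def)

lemma scalar_prod_vavg:
  assumes a: "\<And>k. k < nv \<Longrightarrow> a k \<in> carrier_vec N" and z: "z \<in> carrier_vec N"
  shows "vavg nv w N a \<bullet> z = (\<Sum>k<nv. w k * (a k \<bullet> z))"
proof -
  have "vavg nv w N a \<bullet> z = (\<Sum>i<N. \<Sum>k<nv. w k * (a k $ i * z $ i))"
    using z by (simp add: scalar_prod_def vavg_def lessThan_atLeast0 sum_distrib_left sum_distrib_right mult_ac)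
  also have "\<dots> = (\<Sum>k<nv. w k * (a k \<bullet> z))"
    using a z by (subst sum.swap) (simp add: scalar_prod_def lessThan_atLeast0 sum_distrib_left)
  finally show ?thesis .
qed

lemma bilinear_form_vavg:
  fixes M :: "real mat"
  assumes M: "M \<in> carrier_mat N N" and u: "u \<in> carrier_vec N"
    and a: "\<And>k. k < nv \<Longrightarrow> a k \<in> carrier_vec N"
  shows "u \<bullet> (M *\<^sub>v vavg nv w N a) = (\<Sum>k<nv. w k * (u \<bullet> (M *\<^sub>v a k)))"
proof -
  have "u \<bullet> (M *\<^sub>v vavg nv w N a) = vavg nv w N a \<bullet> (transpose_mat M *\<^sub>v u)"
    using transpose_vec_mult_scalar[OF M _ u, of "vavg nv w N a"] M u
    by (simp add: comm_scalar_prod[of _ N])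
  also have "\<dots> = (\<Sum>k<nv. w k * (a k \<bullet> (transpose_mat M *\<^sub>v u)))"
    using M u a by (intro scalar_prod_vavg) auto
  also have "\<dots> = (\<Sum>k<nv. w k * (u \<bullet> (M *\<^sub>v a k)))"
    using transpose_vec_mult_scalar[OF M _ u] M u a
    by (intro sum.cong refl) (simp add: comm_scalar_prod[of "a _" N])
  finally show ?thesis .
qed

section \<open>The energy method for space-time SBP discretisations\<close>

locale sbp_energy =
  fixes N :: nat and H Dt Dx SAT MT MB :: "real mat"
  assumes carrier: "H \<in> carrier_mat N N" "Dt \<in> carrier_mat N N" "Dx \<in> carrier_mat N N"
      "SAT \<in> carrier_mat N N" "MB \<in> carrier_mat N N"
    and H_pos_def: "\<And>u. u \<in> carrier_vec N \<Longrightarrow> u \<noteq> 0\<^sub>v N \<Longrightarrow> 0 < u \<bullet> (H *\<^sub>v u)"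
    and Dt_sbp: "\<And>u. u \<in> carrier_vec N \<Longrightarrow>
      u \<bullet> ((H * Dt) *\<^sub>v u) = 1/2 * (u \<bullet> (MT *\<^sub>v u)) - 1/2 * (u \<bullet> (MB *\<^sub>v u))"
    and Dx_skew: "transpose_mat (H * Dx) = - (H * Dx)"
    and SAT_boundary: "H * SAT = MB"
    and MT_psd: "\<And>u. u \<in> carrier_vec N \<Longrightarrow> 0 \<le> u \<bullet> (MT *\<^sub>v u)"
    and MB_psd: "\<And>u. u \<in> carrier_vec N \<Longrightarrow> 0 \<le> u \<bullet> (MB *\<^sub>v u)"
    and MB_sym: "transpose_mat MB = MB"
begin

lemma operators_carrier_vec [simp]:
  "x \<in> carrier_vec N \<Longrightarrow> Dt *\<^sub>v x \<in> carrier_vec N"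
  "x \<in> carrier_vec N \<Longrightarrow> Dx *\<^sub>v x \<in> carrier_vec N"
  "x \<in> carrier_vec N \<Longrightarrow> SAT *\<^sub>v x \<in> carrier_vec N"
  using carrier by auto

lemma H_form_add:
  "u \<in> carrier_vec N \<Longrightarrow> x \<in> carrier_vec N \<Longrightarrow> y \<in> carrier_vec N \<Longrightarrow>
   u \<bullet> (H *\<^sub>v (x + y)) = u \<bullet> (H *\<^sub>v x) + u \<bullet> (H *\<^sub>v y)"
  using carrier(1) by (simp add: mult_add_distrib_mat_vec[of _ N N] scalar_prod_add_distrib[of _ N])

lemma H_form_diff:
  "u \<in> carrier_vec N \<Longrightarrow> x \<in> carrier_vec N \<Longrightarrow> y \<in> carrier_vec N \<Longrightarrow>
   u \<bullet> (H *\<^sub>v (x - y)) = u \<bullet> (H *\<^sub>v x) - u \<bullet> (H *\<^sub>v y)"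
  using carrier(1) by (simp add: mult_minus_distrib_mat_vec[of _ N N] scalar_prod_minus_distrib[of _ N])

lemma H_form_smult:
  "u \<in> carrier_vec N \<Longrightarrow> x \<in> carrier_vec N \<Longrightarrow> u \<bullet> (H *\<^sub>v (c \<cdot>\<^sub>v x)) = c * (u \<bullet> (H *\<^sub>v x))"
  using carrier(1) by (simp add: mult_mat_vec[of _ N N])

lemma H_form_SAT:
  "x \<in> carrier_vec N \<Longrightarrow> u \<bullet> (H *\<^sub>v (SAT *\<^sub>v x)) = u \<bullet> (MB *\<^sub>v x)"
  using carrier assoc_mult_mat_vec[of H N N SAT N x] by (simp add: SAT_boundary)

lemmas H_form_simps = H_form_add H_form_diff H_form_smult H_form_SAT

lemma H_form_definite: "u \<in> carrier_vec N \<Longrightarrow> u \<bullet> (H *\<^sub>v u) \<le> 0 \<Longrightarrow> u = 0\<^sub>v N"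
  by (meson H_pos_def not_le)

lemma H_psd: "u \<in> carrier_vec N \<Longrightarrow> 0 \<le> u \<bullet> (H *\<^sub>v u)"
  using H_pos_def[of u] carrier(1) by (cases "u = 0\<^sub>v N") auto

lemma H_form_Dt:
  assumes "u \<in> carrier_vec N"
  shows "u \<bullet> (H *\<^sub>v (Dt *\<^sub>v u)) = 1/2 * (u \<bullet> (MT *\<^sub>v u)) - 1/2 * (u \<bullet> (MB *\<^sub>v u))"
  using Dt_sbp[OF assms] assoc_mult_mat_vec[OF carrier(1,2) assms] by metis

lemma H_form_Dx_skew:
  assumes u: "u \<in> carrier_vec N" and z: "z \<in> carrier_vec N"
  shows "u \<bullet> (H *\<^sub>v (Dx *\<^sub>v z)) = - (z \<bullet> (H *\<^sub>v (Dx *\<^sub>v u)))"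
  using skew_bilinear_form[OF mult_carrier_mat[OF carrier(1,3)] Dx_skew u z]
    assoc_mult_mat_vec[OF carrier(1,3) u] assoc_mult_mat_vec[OF carrier(1,3) z] by metis

lemma energy_bound:
  assumes u: "u \<in> carrier_vec N" and u0: "u0 \<in> carrier_vec N"
    and R: "u \<bullet> (H *\<^sub>v (Dt *\<^sub>v u)) + u \<bullet> (MB *\<^sub>v (u - u0)) \<le> R"
  shows "1/2 * (u \<bullet> (MT *\<^sub>v u)) \<le> 1/2 * (u0 \<bullet> (MB *\<^sub>v u0)) + R"
proof -
  have "u \<bullet> (MB *\<^sub>v u0) \<le> 1/2 * (u \<bullet> (MB *\<^sub>v u)) + 1/2 * (u0 \<bullet> (MB *\<^sub>v u0))"
    using psd_bilinear_bound[OF carrier(5) MB_sym MB_psd u u0] u u0 by simp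
  then show ?thesis
    using R H_form_Dt[OF u] carrier(5) u u0
    by (simp add: mult_minus_distrib_mat_vec[of _ N N] scalar_prod_minus_distrib[of _ N])
qed

end

locale sbp_kinetic_solution = sbp_energy +
  fixes nv :: nat and w v :: "nat \<Rightarrow> real" and \<epsilon> \<sigma>s \<sigma>a :: real
    and \<rho> \<rho>0 :: "real vec" and g g0 :: "nat \<Rightarrow> real vec"
  assumes w_nonneg: "\<And>k. k < nv \<Longrightarrow> 0 \<le> w k"
    and w_sum: "(\<Sum>k<nv. w k) = 1"
    and w_mom: "(\<Sum>k<nv. w k * v k) = 0"
    and eps: "0 < \<epsilon>" and sig_s: "0 < \<sigma>s" and sig_a: "0 \<le> \<sigma>a"
    and rho_carrier: "\<rho> \<in> carrier_vec N" "\<rho>0 \<in> carrier_vec N"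
    and g_carrier: "\<And>k. k < nv \<Longrightarrow> g k \<in> carrier_vec N" "\<And>k. k < nv \<Longrightarrow> g0 k \<in> carrier_vec N"
    and g0_avg: "vavg nv w N g0 = 0\<^sub>v N"
    and eq_rho: "Dt *\<^sub>v \<rho> + Dx *\<^sub>v vavg nv w N (\<lambda>k. v k \<cdot>\<^sub>v g k)
                 = (- \<sigma>a) \<cdot>\<^sub>v \<rho> - SAT *\<^sub>v (\<rho> - \<rho>0)"
    and eq_g: "\<And>k. k < nv \<Longrightarrow>
        Dt *\<^sub>v g k + (v k / \<epsilon>) \<cdot>\<^sub>v (Dx *\<^sub>v g k)
          - (1 / \<epsilon>) \<cdot>\<^sub>v vavg nv w N (\<lambda>j. v j \<cdot>\<^sub>v (Dx *\<^sub>v g j))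
          + (v k / \<epsilon>\<^sup>2) \<cdot>\<^sub>v (Dx *\<^sub>v \<rho>)
        = (- (\<sigma>s / \<epsilon>\<^sup>2 + \<sigma>a)) \<cdot>\<^sub>v g k - SAT *\<^sub>v (g k - g0 k)"
begin

abbreviation avg_v_Dx_g :: "real vec" where
  "avg_v_Dx_g \<equiv> vavg nv w N (\<lambda>j. v j \<cdot>\<^sub>v (Dx *\<^sub>v g j))"

lemma density_eq_tested:
  assumes u: "u \<in> carrier_vec N"
  shows "u \<bullet> (H *\<^sub>v (Dt *\<^sub>v \<rho>)) + u \<bullet> (H *\<^sub>v (Dx *\<^sub>v vavg nv w N (\<lambda>k. v k \<cdot>\<^sub>v g k)))
    = - \<sigma>a * (u \<bullet> (H *\<^sub>v \<rho>)) - u \<bullet> (MB *\<^sub>v (\<rho> - \<rho>0))"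
  using arg_cong[OF eq_rho, of "\<lambda>x. u \<bullet> (H *\<^sub>v x)"] u rho_carrier by (simp add: H_form_simps)

lemma kinetic_eq_tested:
  assumes k: "k < nv" and u: "u \<in> carrier_vec N"
  shows "u \<bullet> (H *\<^sub>v (Dt *\<^sub>v g k)) + v k / \<epsilon> * (u \<bullet> (H *\<^sub>v (Dx *\<^sub>v g k)))
      - 1 / \<epsilon> * (u \<bullet> (H *\<^sub>v avg_v_Dx_g)) + v k / \<epsilon>\<^sup>2 * (u \<bullet> (H *\<^sub>v (Dx *\<^sub>v \<rho>)))
    = - (\<sigma>s / \<epsilon>\<^sup>2 + \<sigma>a) * (u \<bullet> (H *\<^sub>v g k)) - u \<bullet> (MB *\<^sub>v (g k - g0 k))"
  using arg_cong[OF eq_g[OF k], of "\<lambda>x. u \<bullet> (H *\<^sub>v x)"] u rho_carrier g_carrier[OF k]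
  by (simp add: H_form_simps)

lemma H_form_avg_v_Dx_g:
  assumes u: "u \<in> carrier_vec N"
  shows "u \<bullet> (H *\<^sub>v avg_v_Dx_g) = (\<Sum>k<nv. w k * (v k * (u \<bullet> (H *\<^sub>v (Dx *\<^sub>v g k)))))"
  using bilinear_form_vavg[OF carrier(1) u] u g_carrier by (simp add: H_form_smult)

lemma averaged_kinetic_eq_tested:
  assumes u: "u \<in> carrier_vec N"
  shows "u \<bullet> (H *\<^sub>v (Dt *\<^sub>v vavg nv w N g))
    = - (\<sigma>s / \<epsilon>\<^sup>2 + \<sigma>a) * (u \<bullet> (H *\<^sub>v vavg nv w N g)) - u \<bullet> (MB *\<^sub>v vavg nv w N g)"
proof -
  define c where "c = \<sigma>s / \<epsilon>\<^sup>2 + \<sigma>a"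
  define S where "S = u \<bullet> (H *\<^sub>v avg_v_Dx_g)"
  define r where "r = u \<bullet> (H *\<^sub>v (Dx *\<^sub>v \<rho>))"
  have "(\<Sum>k<nv. w k * (u \<bullet> (H *\<^sub>v (Dt *\<^sub>v g k)) + v k / \<epsilon> * (u \<bullet> (H *\<^sub>v (Dx *\<^sub>v g k)))
      - 1 / \<epsilon> * S + v k / \<epsilon>\<^sup>2 * r))
    = (\<Sum>k<nv. w k * (- c * (u \<bullet> (H *\<^sub>v g k)) - u \<bullet> (MB *\<^sub>v g k) + u \<bullet> (MB *\<^sub>v g0 k)))"
    using kinetic_eq_tested[OF _ u] g_carrier carrier(5) u
    by (intro sum.cong refl) (simp add: c_def S_def r_def mult_minus_distrib_mat_vec[of _ N N]
        scalar_prod_minus_distrib[of _ N])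
  moreover have "(\<Sum>k<nv. w k * (u \<bullet> (H *\<^sub>v (Dt *\<^sub>v g k)) + v k / \<epsilon> * (u \<bullet> (H *\<^sub>v (Dx *\<^sub>v g k)))
      - 1 / \<epsilon> * S + v k / \<epsilon>\<^sup>2 * r))
    = (\<Sum>k<nv. w k * (u \<bullet> (H *\<^sub>v (Dt *\<^sub>v g k))))
      + 1 / \<epsilon> * (\<Sum>k<nv. w k * (v k * (u \<bullet> (H *\<^sub>v (Dx *\<^sub>v g k)))))
      - 1 / \<epsilon> * S * (\<Sum>k<nv. w k) + r / \<epsilon>\<^sup>2 * (\<Sum>k<nv. w k * v k)"
    by (simp add: sum.distrib sum_subtractf sum_distrib_left sum_distrib_right algebra_simps)
  moreover have "(\<Sum>k<nv. w k * (- c * (u \<bullet> (H *\<^sub>v g k)) - u \<bullet> (MB *\<^sub>v g k) + u \<bullet> (MB *\<^sub>v g0 k)))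
    = - c * (\<Sum>k<nv. w k * (u \<bullet> (H *\<^sub>v g k))) - (\<Sum>k<nv. w k * (u \<bullet> (MB *\<^sub>v g k)))
      + (\<Sum>k<nv. w k * (u \<bullet> (MB *\<^sub>v g0 k)))"
    by (simp add: sum.distrib sum_subtractf sum_negf sum_distrib_left algebra_simps)
  moreover have "(\<Sum>k<nv. w k * (u \<bullet> (H *\<^sub>v (Dt *\<^sub>v g k)))) = u \<bullet> (H *\<^sub>v (Dt *\<^sub>v vavg nv w N g))"
    using bilinear_form_vavg[OF mult_carrier_mat[OF carrier(1,2)] u g_carrier(1)] carrier g_carrier u by simp
  moreover have "(\<Sum>k<nv. w k * (u \<bullet> (M *\<^sub>v g k))) = u \<bullet> (M *\<^sub>v vavg nv w N g)"
    if "M \<in> carrier_mat N N" for M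
    using bilinear_form_vavg[OF that u g_carrier(1)] by simp
  moreover have "(\<Sum>k<nv. w k * (u \<bullet> (MB *\<^sub>v g0 k))) = 0"
  proof -
    have "MB *\<^sub>v 0\<^sub>v N = 0\<^sub>v N" using carrier(5) by (intro eq_vecI) (auto simp: scalar_prod_def)
    then show ?thesis using bilinear_form_vavg[OF carrier(5) u, of nv g0 w] g_carrier(2) u by (simp add: g0_avg)
  qed
  ultimately show ?thesis
    using w_sum w_mom H_form_avg_v_Dx_g[OF u] carrier by (simp add: S_def c_def)
qed

lemma average_vanishes: "vavg nv w N g = 0\<^sub>v N"
proof -
  define G where "G = vavg nv w N g"
  define c where "c = \<sigma>s / \<epsilon>\<^sup>2 + \<sigma>a"
  have G: "G \<in> carrier_vec N" by (simp add: G_def)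
  have "c * (G \<bullet> (H *\<^sub>v G)) \<le> 0"
    using averaged_kinetic_eq_tested[OF G] H_form_Dt[OF G] MT_psd[OF G] MB_psd[OF G]
    unfolding G_def c_def by linarith
  moreover have "0 < c" using eps sig_s sig_a by (simp add: c_def add_pos_nonneg)
  ultimately show ?thesis
    using H_form_definite[OF G] by (simp add: G_def mult_le_0_iff)
qed

lemma kinetic_energy:
  assumes k: "k < nv"
  shows "1/2 * (g k \<bullet> (MT *\<^sub>v g k)) \<le> 1/2 * (g0 k \<bullet> (MB *\<^sub>v g0 k))
    + 1 / \<epsilon> * (g k \<bullet> (H *\<^sub>v avg_v_Dx_g)) - v k / \<epsilon>\<^sup>2 * (g k \<bullet> (H *\<^sub>v (Dx *\<^sub>v \<rho>)))"
proof -
  have gk: "g k \<in> carrier_vec N" using g_carrier k by simp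
  have "v k / \<epsilon> * (g k \<bullet> (H *\<^sub>v (Dx *\<^sub>v g k))) = 0"
    using H_form_Dx_skew[OF gk gk] by simp
  moreover have "- (\<sigma>s / \<epsilon>\<^sup>2 + \<sigma>a) * (g k \<bullet> (H *\<^sub>v g k)) \<le> 0"
    using sig_a H_psd[OF gk] divide_nonneg_pos[OF less_imp_le[OF sig_s], of "\<epsilon>\<^sup>2"] eps
    by (intro mult_nonpos_nonneg) auto
  ultimately have "g k \<bullet> (H *\<^sub>v (Dt *\<^sub>v g k)) + g k \<bullet> (MB *\<^sub>v (g k - g0 k))
    \<le> 1 / \<epsilon> * (g k \<bullet> (H *\<^sub>v avg_v_Dx_g)) - v k / \<epsilon>\<^sup>2 * (g k \<bullet> (H *\<^sub>v (Dx *\<^sub>v \<rho>)))"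
    using kinetic_eq_tested[OF k gk] by linarith
  from energy_bound[OF gk g_carrier(2)[OF k] this] show ?thesis by simp
qed

lemma density_energy:
  "1/2 * (\<rho> \<bullet> (MT *\<^sub>v \<rho>)) \<le> 1/2 * (\<rho>0 \<bullet> (MB *\<^sub>v \<rho>0))
    + (\<Sum>k<nv. w k * (v k * (g k \<bullet> (H *\<^sub>v (Dx *\<^sub>v \<rho>)))))"
proof (rule energy_bound[OF rho_carrier])
  have "\<rho> \<bullet> (H *\<^sub>v (Dx *\<^sub>v vavg nv w N (\<lambda>k. v k \<cdot>\<^sub>v g k)))
      = - (\<Sum>k<nv. w k * (v k * (g k \<bullet> (H *\<^sub>v (Dx *\<^sub>v \<rho>)))))"
    using H_form_Dx_skew[OF rho_carrier(1) vavg_carrier(1)] rho_carrier g_carrier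
      scalar_prod_vavg[of nv "\<lambda>k. v k \<cdot>\<^sub>v g k" N "H *\<^sub>v (Dx *\<^sub>v \<rho>)" w] carrier
    by simp
  moreover have "0 \<le> \<sigma>a * (\<rho> \<bullet> (H *\<^sub>v \<rho>))"
    using sig_a H_psd[OF rho_carrier(1)] by simp
  ultimately show "\<rho> \<bullet> (H *\<^sub>v (Dt *\<^sub>v \<rho>)) + \<rho> \<bullet> (MB *\<^sub>v (\<rho> - \<rho>0))
    \<le> (\<Sum>k<nv. w k * (v k * (g k \<bullet> (H *\<^sub>v (Dx *\<^sub>v \<rho>)))))"
    using density_eq_tested[OF rho_carrier(1)] by linarith
qed

theorem energy_estimate:
  "1/2 * (\<rho> \<bullet> (MT *\<^sub>v \<rho>)) + \<epsilon>\<^sup>2 / 2 * (\<Sum>k<nv. w k * (g k \<bullet> (MT *\<^sub>v g k)))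
   \<le> 1/2 * (\<rho>0 \<bullet> (MB *\<^sub>v \<rho>0)) + \<epsilon>\<^sup>2 / 2 * (\<Sum>k<nv. w k * (g0 k \<bullet> (MB *\<^sub>v g0 k)))"
proof -
  define X where "X k = g k \<bullet> (H *\<^sub>v (Dx *\<^sub>v \<rho>))" for k
  have "(\<Sum>k<nv. w k * (g k \<bullet> (H *\<^sub>v avg_v_Dx_g))) = 0"
    using scalar_prod_vavg[of nv g N "H *\<^sub>v avg_v_Dx_g" w] average_vanishes g_carrier carrier by simp
  moreover have "(\<Sum>k<nv. w k * (1/2 * (g k \<bullet> (MT *\<^sub>v g k))))
    \<le> (\<Sum>k<nv. w k * (1/2 * (g0 k \<bullet> (MB *\<^sub>v g0 k)) + 1 / \<epsilon> * (g k \<bullet> (H *\<^sub>v avg_v_Dx_g)) - v k / \<epsilon>\<^sup>2 * X k))"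
    using kinetic_energy w_nonneg by (intro sum_mono mult_left_mono) (auto simp: X_def)
  ultimately have "1/2 * (\<Sum>k<nv. w k * (g k \<bullet> (MT *\<^sub>v g k)))
    \<le> 1/2 * (\<Sum>k<nv. w k * (g0 k \<bullet> (MB *\<^sub>v g0 k))) - 1 / \<epsilon>\<^sup>2 * (\<Sum>k<nv. w k * (v k * X k))"
    by (simp add: sum.distrib sum_subtractf sum_distrib_left algebra_simps flip: sum_divide_distrib)
  then have "\<epsilon>\<^sup>2 / 2 * (\<Sum>k<nv. w k * (g k \<bullet> (MT *\<^sub>v g k)))
    \<le> \<epsilon>\<^sup>2 / 2 * (\<Sum>k<nv. w k * (g0 k \<bullet> (MB *\<^sub>v g0 k))) - (\<Sum>k<nv. w k * (v k * X k))"
    using mult_left_mono[of _ _ "\<epsilon>\<^sup>2"] eps by (fastforce simp: field_simps)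
  then show ?thesis using density_energy by (simp add: X_def)
qed

end

section \<open>The three-element periodic scheme\<close>

lemma sbpE_carrier [simp]: "sbpE n \<in> carrier_mat (n + 1) (n + 1)"
  unfolding sbpE_def by (rule minus_carrier_mat) simp

lemma dim_sbpE [simp]: "dim_row (sbpE n) = n + 1" "dim_col (sbpE n) = n + 1"
  using sbpE_carrier[of n] by auto

lemma transpose_sbpE: "transpose_mat (sbpE n) = sbpE n"
  unfolding sbpE_def by (subst transpose_minus[of _ "n + 1" "n + 1"]) (auto simp: transpose_outer)

lemma blocks3_carrier [simp]: "dim_row (blocks3 m B) = 3 * m" "dim_col (blocks3 m B) = 3 * m"
  by (simp_all add: blocks3_def)

lemma index_blocks3:
  "i < 3 * m \<Longrightarrow> j < 3 * m \<Longrightarrow> blocks3 m B $$ (i, j) = B (i div m) (j div m) $$ (i mod m, j mod m)"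
  by (simp add: blocks3_def)

lemma transpose_blocks3:
  assumes "\<And>a b p q. a < 3 \<Longrightarrow> b < 3 \<Longrightarrow> p < m \<Longrightarrow> q < m \<Longrightarrow> B b a $$ (q, p) = - B a b $$ (p, q)"
  shows "transpose_mat (blocks3 m B) = - blocks3 m B"
proof (rule eq_matI)
  fix i j assume "i < dim_row (- blocks3 m B)" "j < dim_col (- blocks3 m B)"
  then have i: "i < 3 * m" and j: "j < 3 * m" by simp_all
  show "transpose_mat (blocks3 m B) $$ (i, j) = (- blocks3 m B) $$ (i, j)"
    using i j div_mod_less_mult[OF i] div_mod_less_mult[OF j] assms[of "i div m" "j div m" "i mod m" "j mod m"]
    by (simp add: index_blocks3)
qed simp_all

lemma QGx_carrier: "QGx nx Qx \<in> carrier_mat (3 * (nx + 1)) (3 * (nx + 1))"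
  unfolding QGx_def by (rule carrier_matI) simp_all

lemma QGx_skew:
  assumes Q: "Qx \<in> carrier_mat (nx + 1) (nx + 1)" and E: "Qx + transpose_mat Qx = sbpE nx"
  shows "transpose_mat (QGx nx Qx) = - QGx nx Qx"
proof -
  let ?m = "nx + 1"
  define B :: "nat \<Rightarrow> nat \<Rightarrow> real mat" where "B = (\<lambda>a b. if a = b then Qx - (1/2) \<cdot>\<^sub>m sbpE nx
      else if b = (a + 1) mod 3 then (1/2) \<cdot>\<^sub>m outer (tR nx) (tL nx)
      else if a = (b + 1) mod 3 then (-(1/2)) \<cdot>\<^sub>m outer (tL nx) (tR nx)
      else 0\<^sub>m ?m ?m)"
  have QE: "Qx $$ (p, q) + Qx $$ (q, p) = sbpE nx $$ (p, q)" "sbpE nx $$ (q, p) = sbpE nx $$ (p, q)"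
    if "p < ?m" "q < ?m" for p q
    using that Q arg_cong[OF E, of "\<lambda>A. A $$ (p, q)"] arg_cong[OF transpose_sbpE[of nx], of "\<lambda>A. A $$ (p, q)"]
    by auto
  have block: "B b a $$ (q, p) = - B a b $$ (p, q)" if "a < 3" "b < 3" "p < ?m" "q < ?m" for a b p q
  proof (cases "a = b")
    case True
    then show ?thesis using that Q QE[of p q] QE(1)[of q p] by (simp add: B_def)
  next
    case False
    moreover have "a \<in> {0, 1, 2}" "b \<in> {0, 1, 2}" using that(1,2) by auto
    ultimately show ?thesis using that(3,4) by (elim insertE emptyE) (simp_all add: B_def)
  qed
  then have "transpose_mat (blocks3 ?m B) = - blocks3 ?m B" by (rule transpose_blocks3)
  moreover have "QGx nx Qx = blocks3 ?m B" unfolding QGx_def B_def ..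
  ultimately show ?thesis by simp
qed

lemma sbp_norm_diagonal_pos:
  assumes "sbp n x p H Q" and i: "i \<le> n"
  shows "0 < H $$ (i, i)"
proof -
  let ?e = "unit_vec (n + 1) i"
  have H: "H \<in> carrier_mat (n + 1) (n + 1)" "diagonal_mat H"
    and pos: "\<And>u. u \<in> carrier_vec (n + 1) \<Longrightarrow> u \<noteq> 0\<^sub>v (n + 1) \<Longrightarrow> 0 < u \<bullet> (H *\<^sub>v u)"
    using assms(1) by (auto simp: sbp_def)
  have "0 < ?e \<bullet> (H *\<^sub>v ?e)" using i by (intro pos) auto
  also have "?e \<bullet> (H *\<^sub>v ?e) = (\<Sum>j<n + 1. H $$ (j, j) * (?e $ j)\<^sup>2)"
    by (rule diagonal_quadratic_form[OF H]) simp
  also have "\<dots> = (\<Sum>j<n + 1. if j = i then H $$ (i, i) else 0)"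
    using i by (intro sum.cong) auto
  also have "\<dots> = H $$ (i, i)"
    using i by (subst sum.delta) auto
  finally show ?thesis .
qed

lemma sbp_norm_invertible:
  assumes "sbp n x p H Q"
  shows "invertible_mat H"
proof (rule invertible_diagonal)
  show "H \<in> carrier_mat (n + 1) (n + 1)" "diagonal_mat H" using assms by (auto simp: sbp_def)
  show "H $$ (i, i) \<noteq> 0" if "i < n + 1" for i
    using sbp_norm_diagonal_pos[OF assms, of i] that by simp
qed

lemma sbp_norm_blockdiag:
  assumes "sbp n x p H Q"
  shows "kron (1\<^sub>m k) H \<in> carrier_mat (k * (n + 1)) (k * (n + 1))" "diagonal_mat (kron (1\<^sub>m k) H)"
    "transpose_mat (kron (1\<^sub>m k) H) = kron (1\<^sub>m k) H" "\<And>j. j < k * (n + 1) \<Longrightarrow> 0 < kron (1\<^sub>m k) H $$ (j, j)"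
proof -
  have H: "H \<in> carrier_mat (n + 1) (n + 1)" "diagonal_mat H" "transpose_mat H = H"
    using assms by (auto simp: sbp_def)
  show "kron (1\<^sub>m k) H \<in> carrier_mat (k * (n + 1)) (k * (n + 1))" "diagonal_mat (kron (1\<^sub>m k) H)"
    "transpose_mat (kron (1\<^sub>m k) H) = kron (1\<^sub>m k) H"
    using kron_carrier_mat[OF one_carrier_mat H(1)] diagonal_kron[OF _ H(2,1)]
    by (auto simp: transpose_kron H(3) diagonal_mat_def)
  show "0 < kron (1\<^sub>m k) H $$ (j, j)" if "j < k * (n + 1)" for j
    using kron_diagonal_pos[OF one_carrier_mat H(1) _ sbp_norm_diagonal_pos[OF assms] that] by simp
qed

lemma weight_Dt_st:
  assumes Ht: "invertible_mat Ht" "Ht \<in> carrier_mat (nt + 1) (nt + 1)"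
    and Qt: "Qt \<in> carrier_mat (nt + 1) (nt + 1)" and Hx: "Hx \<in> carrier_mat (nx + 1) (nx + 1)"
  shows "kron Ht (kron (1\<^sub>m 3) Hx) * Dt_st nx nt Ht Qt = kron Qt (kron (1\<^sub>m 3) Hx)"
proof -
  note iHt = minv_invertible[OF Ht]
  have P: "kron (1\<^sub>m 3) Hx \<in> carrier_mat (3 * (nx + 1)) (3 * (nx + 1))"
    using kron_carrier_mat[OF one_carrier_mat Hx] .
  have "Ht * (minv Ht * Qt) = (Ht * minv Ht) * Qt"
    using assoc_mult_mat[OF Ht(2) iHt(1) Qt] ..
  then have "Ht * (minv Ht * Qt) = Qt" using iHt(2) Qt by simp
  then show ?thesis
    unfolding Dt_st_def kron_one kron_mult[OF Ht(2) P mult_carrier_mat[OF iHt(1) Qt] one_carrier_mat]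
      right_mult_one_mat[OF P] by simp
qed

lemma weight_Dx_st:
  assumes Hx: "invertible_mat Hx" "Hx \<in> carrier_mat (nx + 1) (nx + 1)"
    and Ht: "Ht \<in> carrier_mat (nt + 1) (nt + 1)"
  shows "kron Ht (kron (1\<^sub>m 3) Hx) * Dx_st nx nt Hx Qx = kron Ht (QGx nx Qx)"
proof -
  note iHx = minv_invertible[OF Hx]
  let ?M = "3 * (nx + 1)"
  have P: "kron (1\<^sub>m 3) Hx \<in> carrier_mat ?M ?M" and iP: "kron (1\<^sub>m 3) (minv Hx) \<in> carrier_mat ?M ?M"
    using kron_carrier_mat[OF one_carrier_mat Hx(2)] kron_carrier_mat[OF one_carrier_mat iHx(1)] .
  have QG: "QGx nx Qx \<in> carrier_mat ?M ?M" by (rule QGx_carrier)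
  have "kron (1\<^sub>m 3) Hx * kron (1\<^sub>m 3) (minv Hx) = 1\<^sub>m ?M"
    unfolding kron_mult[OF one_carrier_mat Hx(2) one_carrier_mat iHx(1)] iHx(2) by simp
  then have PD: "kron (1\<^sub>m 3) Hx * DGx nx Hx Qx = QGx nx Qx"
    unfolding DGx_def assoc_mult_mat[OF P iP QG, symmetric] using left_mult_one_mat[OF QG] by simp
  have DG: "DGx nx Hx Qx \<in> carrier_mat ?M ?M" unfolding DGx_def using mult_carrier_mat[OF iP QG] .
  show ?thesis
    unfolding Dx_st_def kron_mult[OF Ht P one_carrier_mat DG] PD right_mult_one_mat[OF Ht] ..
qed

lemma minv_Ht_st:
  assumes Ht: "invertible_mat Ht" "Ht \<in> carrier_mat (nt + 1) (nt + 1)"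
  shows "minv (Ht_st nx Ht) = kron (minv Ht) (1\<^sub>m (3 * (nx + 1)))"
proof -
  note iHt = minv_invertible[OF Ht]
  let ?M = "3 * (nx + 1)" and ?T = "nt + 1"
  have I: "1\<^sub>m ?M * 1\<^sub>m ?M = (1\<^sub>m ?M :: real mat)" by simp
  have "kron Ht (1\<^sub>m ?M) * kron (minv Ht) (1\<^sub>m ?M) = 1\<^sub>m (?T * ?M)"
    "kron (minv Ht) (1\<^sub>m ?M) * kron Ht (1\<^sub>m ?M) = 1\<^sub>m (?T * ?M)"
    unfolding kron_mult[OF Ht(2) one_carrier_mat iHt(1) one_carrier_mat]
      kron_mult[OF iHt(1) one_carrier_mat Ht(2) one_carrier_mat] iHt(2,3) I by simp_all
  then show ?thesis
    unfolding Ht_st_def kron_one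
    using minv_eqI kron_carrier_mat[OF Ht(2) one_carrier_mat] kron_carrier_mat[OF iHt(1) one_carrier_mat]
    by blast
qed

lemma weight_SAT:
  assumes Ht: "invertible_mat Ht" "Ht \<in> carrier_mat (nt + 1) (nt + 1)"
    and Hx: "Hx \<in> carrier_mat (nx + 1) (nx + 1)"
  shows "kron Ht (kron (1\<^sub>m 3) Hx) * (minv (Ht_st nx Ht) * tB_st nx nt * transpose_mat (tB_st nx nt))
    = MB nx nt Hx"
proof -
  note iHt = minv_invertible[OF Ht]
  let ?M = "3 * (nx + 1)" and ?T = "nt + 1" and ?e = "col_mat (tL nt)"
  have P: "kron (1\<^sub>m 3) Hx \<in> carrier_mat ?M ?M" using kron_carrier_mat[OF one_carrier_mat Hx] .
  have e: "?e \<in> carrier_mat ?T 1" and eT: "transpose_mat ?e \<in> carrier_mat 1 ?T"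
    by (simp_all add: col_mat_def)
  have I: "1\<^sub>m ?M * 1\<^sub>m ?M = (1\<^sub>m ?M :: real mat)" by simp
  have "minv (Ht_st nx Ht) * tB_st nx nt * transpose_mat (tB_st nx nt)
      = kron (minv Ht * ?e * transpose_mat ?e) (1\<^sub>m ?M)"
    unfolding minv_Ht_st[OF Ht] tB_st_def kron_one transpose_kron transpose_one
      kron_mult[OF iHt(1) one_carrier_mat e one_carrier_mat] I
      kron_mult[OF mult_carrier_mat[OF iHt(1) e] one_carrier_mat eT one_carrier_mat]
    by (rule refl)
  moreover have "Ht * (minv Ht * ?e * transpose_mat ?e) = outer (tL nt) (tL nt)"
  proof -
    have "Ht * (minv Ht * ?e * transpose_mat ?e) = (Ht * minv Ht) * ?e * transpose_mat ?e"
      by (simp only: assoc_mult_mat[OF Ht(2) iHt(1) e]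
          assoc_mult_mat[OF Ht(2) mult_carrier_mat[OF iHt(1) e] eT])
    then show ?thesis unfolding iHt(2) left_mult_one_mat[OF e] col_mat_outer .
  qed
  moreover have "minv Ht * ?e * transpose_mat ?e \<in> carrier_mat ?T ?T"
    using mult_carrier_mat[OF mult_carrier_mat[OF iHt(1) e] eT] .
  ultimately show ?thesis
    unfolding MB_def using kron_mult[OF Ht(2) P _ one_carrier_mat] right_mult_one_mat[OF P] by simp
qed

lemma kron_outer_unit_vec_psd:
  assumes P: "P \<in> carrier_mat m m" "diagonal_mat P" and "\<And>j. j < m \<Longrightarrow> 0 \<le> P $$ (j, j)"
    and "k < n" and "u \<in> carrier_vec (n * m)"
  shows "0 \<le> u \<bullet> (kron (outer (unit_vec n k) (unit_vec n k)) P *\<^sub>v u)"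
  using assms
  by (intro diagonal_psd[OF kron_carrier_mat diagonal_kron kron_diagonal_nonneg])
    (auto simp: diagonal_outer_unit_vec)

lemma kron_sbp_quadratic_form:
  assumes Q: "Q \<in> carrier_mat (n + 1) (n + 1)" "Q + transpose_mat Q = sbpE n"
    and P: "P \<in> carrier_mat m m" "transpose_mat P = P" and u: "u \<in> carrier_vec ((n + 1) * m)"
  shows "u \<bullet> (kron Q P *\<^sub>v u) = 1/2 * (u \<bullet> (kron (outer (tR n) (tR n)) P *\<^sub>v u))
    - 1/2 * (u \<bullet> (kron (outer (tL n) (tL n)) P *\<^sub>v u))"
proof -
  have R: "outer (tR n) (tR n) \<in> carrier_mat (n + 1) (n + 1)"
    and L: "outer (tL n) (tL n) \<in> carrier_mat (n + 1) (n + 1)" by simp_all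
  have "kron Q P + transpose_mat (kron Q P) = kron (outer (tR n) (tR n)) P - kron (outer (tL n) (tL n)) P"
    unfolding transpose_kron P(2) kron_add_left[OF Q(1) transpose_carrier_mat[THEN iffD2, OF Q(1)], symmetric]
      Q(2) sbpE_def kron_minus_left[OF R L] ..
  with quadratic_form_symmetric_part[OF kron_carrier_mat[OF Q(1) P(1)] u]
  show ?thesis
    using kron_carrier_mat[OF R P(1)] kron_carrier_mat[OF L P(1)] u
    by (simp add: minus_mult_distrib_mat_vec scalar_prod_minus_distrib[of _ "(n + 1) * m"])
qed

lemma sbp_scheme_carriers:
  assumes x: "sbp nx xn px Hx Qx" and t: "sbp nt tn pt Ht Qt"
  defines "N \<equiv> (nt + 1) * (3 * (nx + 1))"
  shows "kron Ht (kron (1\<^sub>m 3) Hx) \<in> carrier_mat N N" "Dt_st nx nt Ht Qt \<in> carrier_mat N N"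
    "Dx_st nx nt Hx Qx \<in> carrier_mat N N"
    "minv (Ht_st nx Ht) * tB_st nx nt * transpose_mat (tB_st nx nt) \<in> carrier_mat N N"
    "MB nx nt Hx \<in> carrier_mat N N"
proof -
  have Hx: "Hx \<in> carrier_mat (nx + 1) (nx + 1)" using x by (simp add: sbp_def)
  have Ht: "Ht \<in> carrier_mat (nt + 1) (nt + 1)" and Qt: "Qt \<in> carrier_mat (nt + 1) (nt + 1)"
    using t by (simp_all add: sbp_def)
  note iHt = minv_invertible[OF sbp_norm_invertible[OF t] Ht]
  note iHx = minv_invertible[OF sbp_norm_invertible[OF x] Hx]
  note P = kron_carrier_mat[OF one_carrier_mat Hx, of 3]
  show "kron Ht (kron (1\<^sub>m 3) Hx) \<in> carrier_mat N N"
    unfolding N_def using kron_carrier_mat[OF Ht P] .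
  show "Dt_st nx nt Ht Qt \<in> carrier_mat N N"
    unfolding N_def Dt_st_def kron_one using kron_carrier_mat[OF mult_carrier_mat[OF iHt(1) Qt] one_carrier_mat] .
  show "Dx_st nx nt Hx Qx \<in> carrier_mat N N"
    unfolding N_def Dx_st_def DGx_def using iHx(1) QGx_carrier
    by (intro kron_carrier_mat mult_carrier_mat) auto
  show "minv (Ht_st nx Ht) * tB_st nx nt * transpose_mat (tB_st nx nt) \<in> carrier_mat N N"
    unfolding N_def minv_Ht_st[OF sbp_norm_invertible[OF t] Ht] tB_st_def kron_one transpose_kron
    using iHt(1) by (intro mult_carrier_mat kron_carrier_mat) (auto simp: col_mat_def)
  show "MB nx nt Hx \<in> carrier_mat N N"
    unfolding N_def MB_def using kron_carrier_mat[OF _ P, of "outer (tL nt) (tL nt)" "nt + 1" "nt + 1"] by simp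
qed

lemma sbp_scheme_energy:
  assumes x: "sbp nx xn px Hx Qx" and t: "sbp nt tn pt Ht Qt"
  shows "sbp_energy ((nt + 1) * (3 * (nx + 1))) (kron Ht (kron (1\<^sub>m 3) Hx))
    (Dt_st nx nt Ht Qt) (Dx_st nx nt Hx Qx) (minv (Ht_st nx Ht) * tB_st nx nt * transpose_mat (tB_st nx nt))
    (MT nx nt Hx) (MB nx nt Hx)"
proof (rule sbp_energy.intro[OF sbp_scheme_carriers[OF x t]])
  let ?M = "3 * (nx + 1)" and ?T = "nt + 1" and ?P = "kron (1\<^sub>m 3) Hx"
  have Hx: "Hx \<in> carrier_mat (nx + 1) (nx + 1)"
    and Qx: "Qx \<in> carrier_mat (nx + 1) (nx + 1)" "Qx + transpose_mat Qx = sbpE nx"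
    using x by (auto simp: sbp_def)
  have Ht: "Ht \<in> carrier_mat ?T ?T" "diagonal_mat Ht" "transpose_mat Ht = Ht"
    and Qt: "Qt \<in> carrier_mat ?T ?T" "Qt + transpose_mat Qt = sbpE nt"
    using t by (auto simp: sbp_def)
  note P = sbp_norm_blockdiag[OF x, where k = 3]
  show "0 < u \<bullet> (kron Ht ?P *\<^sub>v u)" if "u \<in> carrier_vec (?T * ?M)" "u \<noteq> 0\<^sub>v (?T * ?M)" for u
    using that Ht P sbp_norm_diagonal_pos[OF t]
    by (intro diagonal_pos_def[OF kron_carrier_mat diagonal_kron kron_diagonal_pos]) auto
  show "u \<bullet> ((kron Ht ?P * Dt_st nx nt Ht Qt) *\<^sub>v u)
    = 1/2 * (u \<bullet> (MT nx nt Hx *\<^sub>v u)) - 1/2 * (u \<bullet> (MB nx nt Hx *\<^sub>v u))"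
    if "u \<in> carrier_vec (?T * ?M)" for u
    unfolding weight_Dt_st[OF sbp_norm_invertible[OF t] Ht(1) Qt(1) Hx] MT_def MB_def
    using kron_sbp_quadratic_form[OF Qt P(1,3) that] .
  show "transpose_mat (kron Ht ?P * Dx_st nx nt Hx Qx) = - (kron Ht ?P * Dx_st nx nt Hx Qx)"
    unfolding weight_Dx_st[OF sbp_norm_invertible[OF x] Hx Ht(1)] transpose_kron Ht(3)
      QGx_skew[OF Qx] kron_uminus_right ..
  show "kron Ht ?P * (minv (Ht_st nx Ht) * tB_st nx nt * transpose_mat (tB_st nx nt)) = MB nx nt Hx"
    using weight_SAT[OF sbp_norm_invertible[OF t] Ht(1) Hx] .
  show "0 \<le> u \<bullet> (MT nx nt Hx *\<^sub>v u)" if "u \<in> carrier_vec (?T * ?M)" for u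
    unfolding MT_def tR_def using kron_outer_unit_vec_psd[OF P(1,2) _ _ that] P(4) by (simp add: less_imp_le)
  show "0 \<le> u \<bullet> (MB nx nt Hx *\<^sub>v u)" if "u \<in> carrier_vec (?T * ?M)" for u
    unfolding MB_def tL_def using kron_outer_unit_vec_psd[OF P(1,2) _ _ that] P(4) by (simp add: less_imp_le)
  show "transpose_mat (MB nx nt Hx) = MB nx nt Hx"
    unfolding MB_def transpose_kron[of "outer (tL nt) (tL nt)" ?P] transpose_outer P(3) ..
qed

theorem theorem3p8:
  fixes nx nt nv px pt :: nat
    and xn tn :: "nat \<Rightarrow> real"
    and Hx Qx Ht Qt :: "real mat"
    and v w :: "nat \<Rightarrow> real"
    and \<epsilon> \<sigma>s \<sigma>a :: real
    and \<rho> \<rho>0 :: "real vec"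
    and g g0 :: "nat \<Rightarrow> real vec"
  defines "N \<equiv> (nt+1) * (3 * (nx+1))"
    and "Dx \<equiv> Dx_st nx nt Hx Qx"
    and "Dt \<equiv> Dt_st nx nt Ht Qt"
    and "SAT \<equiv> minv (Ht_st nx Ht) * tB_st nx nt * transpose_mat (tB_st nx nt)"
  assumes sbp_x: "sbp nx xn px Hx Qx"
    and sbp_t: "sbp nt tn pt Ht Qt"
    and nv: "1 \<le> nv"
    and w_pos: "\<forall>k<nv. 0 < w k"
    and w_sum: "(\<Sum>k<nv. w k) = 1"
    and w_mom: "(\<Sum>k<nv. w k * v k) = 0"
    and eps: "0 < \<epsilon>" and sig_s: "0 < \<sigma>s" and sig_a: "0 \<le> \<sigma>a"
    and dim_rho: "\<rho> \<in> carrier_vec N" and dim_rho0: "\<rho>0 \<in> carrier_vec N"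
    and dim_g: "\<forall>k<nv. g k \<in> carrier_vec N" and dim_g0: "\<forall>k<nv. g0 k \<in> carrier_vec N"
    and g0_avg: "vavg nv w N g0 = 0\<^sub>v N"
    and eq_rho: "Dt *\<^sub>v \<rho> + Dx *\<^sub>v vavg nv w N (\<lambda>k. v k \<cdot>\<^sub>v g k)
                 = (- \<sigma>a) \<cdot>\<^sub>v \<rho> - SAT *\<^sub>v (\<rho> - \<rho>0)"
    and eq_g: "\<forall>k<nv.
        Dt *\<^sub>v g k + (v k / \<epsilon>) \<cdot>\<^sub>v (Dx *\<^sub>v g k)
          - (1 / \<epsilon>) \<cdot>\<^sub>v vavg nv w N (\<lambda>j. v j \<cdot>\<^sub>v (Dx *\<^sub>v g j))
          + (v k / \<epsilon>\<^sup>2) \<cdot>\<^sub>v (Dx *\<^sub>v \<rho>)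
        = (- (\<sigma>s / \<epsilon>\<^sup>2 + \<sigma>a)) \<cdot>\<^sub>v g k - SAT *\<^sub>v (g k - g0 k)"
  shows "(1/2) * (\<rho> \<bullet> (MT nx nt Hx *\<^sub>v \<rho>))
           + (\<epsilon>\<^sup>2 / 2) * (\<Sum>k<nv. w k * (g k \<bullet> (MT nx nt Hx *\<^sub>v g k)))
         \<le> (1/2) * (\<rho>0 \<bullet> (MB nx nt Hx *\<^sub>v \<rho>0))
           + (\<epsilon>\<^sup>2 / 2) * (\<Sum>k<nv. w k * (g0 k \<bullet> (MB nx nt Hx *\<^sub>v g0 k)))"
proof -
  have "sbp_energy N (kron Ht (kron (1\<^sub>m 3) Hx)) Dt Dx SAT (MT nx nt Hx) (MB nx nt Hx)"
    unfolding N_def Dt_def Dx_def SAT_def by (rule sbp_scheme_energy[OF sbp_x sbp_t])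
  then have "sbp_kinetic_solution N (kron Ht (kron (1\<^sub>m 3) Hx)) Dt Dx SAT (MT nx nt Hx) (MB nx nt Hx)
    nv w v \<epsilon> \<sigma>s \<sigma>a \<rho> \<rho>0 g g0"
    using w_pos w_sum w_mom eps sig_s sig_a dim_rho dim_rho0 dim_g dim_g0 g0_avg eq_rho eq_g
    by (intro sbp_kinetic_solution.intro sbp_kinetic_solution_axioms.intro) (auto simp: less_imp_le)
  then show ?thesis by (rule sbp_kinetic_solution.energy_estimate)
qed

end
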